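(* Let $G$ be a connected, nontraceable detour graph of order $n$. Then: (1) $G$ is $2$-connected (hence $\delta(G)\ge 2$); (2) every vertex of $G$ has at most one neighbour of degree $2$; (3) $G$ contains a longest path $P$ such that both endvertices of $P$ have degree at least $3$; (4) $\Delta(G)\le \tau(G)-4$; (5) if $T$ is the set of vertices of degree $2$ in $G$, then $|V(G)\setminus T|\ge |T|$; (6) $|E(G)|\ge \left\lceil \frac{5n}{4}\right\rceil$.
   Context: All graphs are finite and simple. The order of a path is its number of vertices. For a vertex $v$ of $G$, $\tau(v)$ is the order of a longest path in $G$ having $v$ as an endvertex, and $\tau(G)$ is the order of a longest path in $G$. A graph is traceable if it has a path containing all its vertices (a hamiltonian path), and nontraceable otherwise. A detour graph is a graph in which all vertices have the same value of $\tau(v)$. $\delta(G)$ and $\Delta(G)$ are the minimum and maximum degree. *)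

theory Defs
  imports Complex_Main
begin

definition sgraph :: "'a set \<Rightarrow> ('a \<Rightarrow> 'a \<Rightarrow> bool) \<Rightarrow> bool" where
  "sgraph V E \<longleftrightarrow> finite V \<and> (\<forall>x y. E x y \<longrightarrow> x \<in> V \<and> y \<in> V)
     \<and> (\<forall>x y. E x y \<longrightarrow> E y x) \<and> (\<forall>x. \<not> E x x)"

definition is_path :: "'a set \<Rightarrow> ('a \<Rightarrow> 'a \<Rightarrow> bool) \<Rightarrow> 'a list \<Rightarrow> bool" where
  "is_path V E p \<longleftrightarrow> p \<noteq> [] \<and> distinct p \<and> set p \<subseteq> V
     \<and> (\<forall>i. Suc i < length p \<longrightarrow> E (p ! i) (p ! Suc i))"

definition degree :: "'a set \<Rightarrow> ('a \<Rightarrow> 'a \<Rightarrow> bool) \<Rightarrow> 'a \<Rightarrow> nat" where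
  "degree V E v = card {u \<in> V. E v u}"

definition edges :: "'a set \<Rightarrow> ('a \<Rightarrow> 'a \<Rightarrow> bool) \<Rightarrow> 'a set set" where
  "edges V E = {{u, v} | u v. u \<in> V \<and> v \<in> V \<and> E u v}"

text \<open>tau v: order of a longest path having v as an endvertex (v as first vertex;
  paths can be reversed).\<close>
definition tau :: "'a set \<Rightarrow> ('a \<Rightarrow> 'a \<Rightarrow> bool) \<Rightarrow> 'a \<Rightarrow> nat" where
  "tau V E v = Max {length p | p. is_path V E p \<and> hd p = v}"

definition tauG :: "'a set \<Rightarrow> ('a \<Rightarrow> 'a \<Rightarrow> bool) \<Rightarrow> nat" where
  "tauG V E = Max {length p | p. is_path V E p}"

definition traceable :: "'a set \<Rightarrow> ('a \<Rightarrow> 'a \<Rightarrow> bool) \<Rightarrow> bool" where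
  "traceable V E \<longleftrightarrow> (\<exists>p. is_path V E p \<and> set p = V)"

definition detour_graph :: "'a set \<Rightarrow> ('a \<Rightarrow> 'a \<Rightarrow> bool) \<Rightarrow> bool" where
  "detour_graph V E \<longleftrightarrow> (\<forall>u\<in>V. \<forall>v\<in>V. tau V E u = tau V E v)"

definition connected_graph :: "'a set \<Rightarrow> ('a \<Rightarrow> 'a \<Rightarrow> bool) \<Rightarrow> bool" where
  "connected_graph V E \<longleftrightarrow> V \<noteq> {} \<and>
     (\<forall>u\<in>V. \<forall>v\<in>V. \<exists>p. is_path V E p \<and> hd p = u \<and> last p = v)"

definition delete_vertex :: "'a set \<Rightarrow> ('a \<Rightarrow> 'a \<Rightarrow> bool) \<Rightarrow> 'a \<Rightarrow> 'a set \<times> ('a \<Rightarrow> 'a \<Rightarrow> bool)" where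
  "delete_vertex V E x = (V - {x}, \<lambda>u v. E u v \<and> u \<noteq> x \<and> v \<noteq> x)"

definition two_connected :: "'a set \<Rightarrow> ('a \<Rightarrow> 'a \<Rightarrow> bool) \<Rightarrow> bool" where
  "two_connected V E \<longleftrightarrow> card V \<ge> 3 \<and> connected_graph V E \<and>
     (\<forall>x\<in>V. case_prod connected_graph (delete_vertex V E x))"

end

theory Submission
  imports Defs
begin

(* Every vertex of a connected detour graph G is an end of a longest path, and since G is
   nontraceable the two ends of a longest path are never adjacent: otherwise the path closes to
   a cycle missing some vertex, and an edge leaving that cycle yields a longer path. Hence all
   neighbours of an end of a longest path P lie on P. A degree-2 neighbour of an end v is then
   the successor of v or the other end of P, which gives (2); a Posa rotation at an end of
   degree 2 produces a longest path whose new end has degree at least 3, which gives (3); and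
   the crossing argument of Dirac and Ore gives deg u + deg v < tau(G) for the ends u, v of a
   longest path, which together with (3) gives (4). If G - x were disconnected, a path from a
   vertex outside the component of the successor of x on a longest path starting at x could be
   prepended to that path, so G is 2-connected. Sending each vertex of degree 2 to a neighbour
   of another degree is injective by (2), which gives (5), and (6) follows from (5) by the
   handshake lemma. *)

lemma is_path_iff_successively:
  "is_path V E p \<longleftrightarrow> p \<noteq> [] \<and> distinct p \<and> set p \<subseteq> V \<and> successively E p"
  unfolding is_path_def successively_conv_nth by blast

lemma is_path_nonempty: "is_path V E p \<Longrightarrow> p \<noteq> []"
  by (simp add: is_path_def)

lemma is_path_distinct: "is_path V E p \<Longrightarrow> distinct p"
  by (simp add: is_path_def)

lemma is_path_set: "is_path V E p \<Longrightarrow> set p \<subseteq> V"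
  by (simp add: is_path_def)

lemma is_path_hd: "is_path V E p \<Longrightarrow> hd p \<in> V"
  using hd_in_set is_path_nonempty is_path_set by blast

lemma is_path_singleton [simp]: "is_path V E [v] \<longleftrightarrow> v \<in> V"
  by (simp add: is_path_def)

lemma successively_rtranclp_hd:
  assumes "successively R xs" "x \<in> set xs"
  shows "R\<^sup>*\<^sup>* (hd xs) x"
  using assms
proof (induction xs rule: induct_list012)
  case (3 a b zs)
  then show ?case by (auto intro: converse_rtranclp_into_rtranclp)
qed auto

lemma successively_crossing:
  assumes "successively R xs" "xs \<noteq> []" "\<not> P (hd xs)" "P (last xs)"
  shows "\<exists>x y. R x y \<and> \<not> P x \<and> P y"
  using assms by (induction xs rule: induct_list012) (auto split: if_splits)

lemma rtranclp_imp_distinct_successively: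
  assumes "R\<^sup>*\<^sup>* a b"
  shows "\<exists>p. p \<noteq> [] \<and> distinct p \<and> successively R p \<and> hd p = a \<and> last p = b
    \<and> set p \<subseteq> {z. R\<^sup>*\<^sup>* a z}"
  using assms
proof (induction rule: rtranclp_induct)
  case base
  show ?case by (intro exI[of _ "[a]"]) auto
next
  case (step y z)
  then obtain p where p: "p \<noteq> []" "distinct p" "successively R p" "hd p = a" "last p = y"
    "set p \<subseteq> {z. R\<^sup>*\<^sup>* a z}" by blast
  show ?case
  proof (cases "z \<in> set p")
    case True
    then obtain us ws where p_split: "p = us @ z # ws" by (meson split_list)
    have "hd (us @ [z]) = a" using p(4) p_split by (cases us) auto
    with p p_split show ?thesis
      by (intro exI[of _ "us @ [z]"]) (auto simp: successively_append_iff)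
  next
    case False
    with p step show ?thesis
      by (intro exI[of _ "p @ [z]"]) (auto simp: successively_append_iff)
  qed
qed

lemma connected_graphI:
  assumes "V \<noteq> {}" and edges_in: "\<And>x y. E x y \<Longrightarrow> y \<in> V"
    and reach: "\<And>u v. u \<in> V \<Longrightarrow> v \<in> V \<Longrightarrow> E\<^sup>*\<^sup>* u v"
  shows "connected_graph V E"
  unfolding connected_graph_def
proof (intro conjI ballI)
  fix u v assume u: "u \<in> V" and v: "v \<in> V"
  then obtain p where p: "p \<noteq> []" "distinct p" "successively E p" "hd p = u" "last p = v"
    "set p \<subseteq> {z. E\<^sup>*\<^sup>* u z}" using rtranclp_imp_distinct_successively reach by meson
  have "z \<in> V" if "E\<^sup>*\<^sup>* u z" for z
    using that u by (induction rule: rtranclp_induct) (auto dest: edges_in)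
  with p show "\<exists>p. is_path V E p \<and> hd p = u \<and> last p = v"
    by (auto simp: is_path_iff_successively)
qed fact

lemma card_nth_indices_distinct:
  assumes "distinct xs"
  shows "card {i. i < length xs \<and> P (xs ! i)} = card {x \<in> set xs. P x}"
proof -
  have "{x \<in> set xs. P x} = (!) xs ` {i. i < length xs \<and> P (xs ! i)}"
    by (auto simp: in_set_conv_nth)
  moreover have "inj_on ((!) xs) {i. i < length xs \<and> P (xs ! i)}"
    using assms by (auto simp: inj_on_def nth_eq_iff_index_eq)
  ultimately show ?thesis by (simp add: card_image)
qed

locale simple_graph =
  fixes V :: "'a set" and E :: "'a \<Rightarrow> 'a \<Rightarrow> bool"
  assumes sgraph: "sgraph V E"
begin

abbreviation "deg \<equiv> degree V E"
abbreviation "longest_path p \<equiv> is_path V E p \<and> length p = tauG V E"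

lemma finite_V: "finite V"
  using sgraph by (simp add: sgraph_def)

lemma edge_vertices: "E x y \<Longrightarrow> x \<in> V \<and> y \<in> V"
  using sgraph by (simp add: sgraph_def)

lemma edge_sym: "E x y \<Longrightarrow> E y x"
  using sgraph by (simp add: sgraph_def)

lemma edge_irrefl: "\<not> E x x"
  using sgraph by (simp add: sgraph_def)

lemma successively_converse_edge [simp]:
  "successively (\<lambda>x y. E y x) xs \<longleftrightarrow> successively E xs"
proof -
  have "(\<lambda>x y. E y x) = E" using edge_sym by blast
  then show ?thesis by (rule arg_cong)
qed

lemma is_path_rev [simp]: "is_path V E (rev p) \<longleftrightarrow> is_path V E p"
  by (simp add: is_path_iff_successively)

lemma is_path_rotate:
  assumes "is_path V E (xs @ ys)" "E (hd xs) (hd ys)"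
  shows "is_path V E (rev xs @ ys)"
  using assms edge_sym
  by (cases "xs = []"; cases "ys = []")
     (auto simp: is_path_iff_successively successively_append_iff last_rev)

lemma length_path_le_card: "is_path V E p \<Longrightarrow> length p \<le> card V"
  using card_mono[OF finite_V is_path_set] distinct_card[OF is_path_distinct] by metis

lemma finite_path_lengths: "finite {length p | p. is_path V E p \<and> Q p}"
  by (rule finite_subset[of _ "{..card V}"]) (auto dest: length_path_le_card)

lemma length_path_le_tauG: "is_path V E p \<Longrightarrow> length p \<le> tauG V E"
  unfolding tauG_def by (rule Max_ge[OF finite_path_lengths[of "\<lambda>_. True", simplified]]) auto

lemma length_path_le_tau: "is_path V E p \<Longrightarrow> length p \<le> tau V E (hd p)"
  unfolding tau_def by (rule Max_ge[OF finite_path_lengths]) auto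

lemma tau_attained:
  assumes "v \<in> V"
  shows "\<exists>p. is_path V E p \<and> hd p = v \<and> length p = tau V E v"
proof -
  have "length [v] \<in> {length p | p. is_path V E p \<and> hd p = v}" using assms by fastforce
  then have "{length p | p. is_path V E p \<and> hd p = v} \<noteq> {}" by blast
  from Max_in[OF finite_path_lengths this] show ?thesis
    unfolding tau_def by auto
qed

lemma longest_path_exists:
  assumes "V \<noteq> {}"
  shows "\<exists>p. longest_path p"
proof -
  obtain v where "v \<in> V" using assms by auto
  then have "length [v] \<in> {length p | p. is_path V E p}" by fastforce
  then have "{length p | p. is_path V E p} \<noteq> {}" by blast
  from Max_in[OF finite_path_lengths[of "\<lambda>_. True", simplified] this] show ?thesis
    unfolding tauG_def by auto
qed

lemma longest_path_hd_neighbour: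
  assumes "longest_path p" "E (hd p) w"
  shows "w \<in> set p"
proof (rule ccontr)
  assume "w \<notin> set p"
  with assms edge_vertices[of "hd p" w] edge_sym[of "hd p" w] have "is_path V E (w # p)"
    by (cases p) (auto simp: is_path_iff_successively)
  then show False using length_path_le_tauG assms by fastforce
qed

lemma longest_path_hd_neighbours:
  assumes "longest_path p"
  shows "{u \<in> V. E (hd p) u} = {u \<in> set (tl p). E (hd p) u}"
proof -
  have "p = hd p # tl p" "set p \<subseteq> V"
    using is_path_nonempty[of V E p] is_path_set[of V E p] assms by auto
  then show ?thesis
    using longest_path_hd_neighbour[OF assms] edge_irrefl by (auto, metis set_ConsD)
qed

lemma longest_path_last_neighbours:
  assumes "longest_path p"
  shows "{u \<in> V. E (last p) u} = {u \<in> set (butlast p). E (last p) u}"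
proof -
  have "p \<noteq> []" using assms is_path_nonempty by blast
  then have "hd (rev p) = last p" "set (tl (rev p)) = set (butlast p)"
    by (simp_all add: hd_rev) (metis butlast_rev rev_rev_ident set_rev)
  then show ?thesis using longest_path_hd_neighbours[of "rev p"] assms by simp
qed

lemma degree_hd_longest_path:
  assumes "longest_path p"
  shows "deg (hd p) = card {i. i < length p - 1 \<and> E (hd p) (p ! Suc i)}"
proof -
  have "{i. i < length p - 1 \<and> E (hd p) (p ! Suc i)}
      = {i. i < length (tl p) \<and> E (hd p) (tl p ! i)}"
    by (auto simp: nth_tl)
  then show ?thesis
    using card_nth_indices_distinct[of "tl p" "E (hd p)"] longest_path_hd_neighbours[OF assms] assms
      distinct_tl[OF is_path_distinct[of V E p]]
    by (simp add: degree_def)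
qed

lemma degree_last_longest_path:
  assumes "longest_path p"
  shows "deg (last p) = card {i. i < length p - 1 \<and> E (last p) (p ! i)}"
proof -
  have "{i. i < length p - 1 \<and> E (last p) (p ! i)}
      = {i. i < length (butlast p) \<and> E (last p) (butlast p ! i)}"
    by (auto simp: nth_butlast)
  then show ?thesis
    using card_nth_indices_distinct[of "butlast p" "E (last p)"] longest_path_last_neighbours[OF assms]
      assms distinct_butlast[OF is_path_distinct[of V E p]]
    by (simp add: degree_def)
qed

lemma degree_ge_card: "S \<subseteq> {u \<in> V. E a u} \<Longrightarrow> card S \<le> deg a"
  unfolding degree_def using finite_V by (intro card_mono) auto

lemma sum_degree: "(\<Sum>v\<in>V. deg v) = 2 * card (edges V E)"
proof -
  have finite_edges: "finite (edges V E)"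
    by (rule finite_subset[of _ "Pow V"]) (auto simp: edges_def finite_V)
  have edge_card: "card {v \<in> V. v \<in> e} = 2" if e: "e \<in> edges V E" for e
  proof -
    obtain u w where "e = {u, w}" "u \<in> V" "w \<in> V" "E u w"
      using e unfolding edges_def by blast
    then have "{v \<in> V. v \<in> e} = {u, w}" by auto
    moreover have "u \<noteq> w" using \<open>E u w\<close> edge_irrefl by blast
    ultimately show ?thesis by simp
  qed
  have degree_incident: "deg v = card {e \<in> edges V E. v \<in> e}" if "v \<in> V" for v
  proof -
    have "{e \<in> edges V E. v \<in> e} = (\<lambda>u. {v, u}) ` {u \<in> V. E v u}"
      using that by (auto simp: edges_def intro: edge_sym)
    moreover have "inj_on (\<lambda>u. {v, u}) {u \<in> V. E v u}"
      by (auto simp: inj_on_def doubleton_eq_iff)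
    ultimately show ?thesis by (simp add: degree_def card_image)
  qed
  have "(\<Sum>v\<in>V. deg v) = (\<Sum>v\<in>V. card {e \<in> edges V E. v \<in> e})"
    by (rule sum.cong) (simp_all add: degree_incident)
  also have "\<dots> = 2 * card (edges V E)"
    by (rule sum_multicount[OF finite_V finite_edges]) (simp add: edge_card)
  finally show ?thesis .
qed

lemma connected_cross_edge:
  assumes "connected_graph V E" "S \<subseteq> V" "S \<noteq> {}" "S \<noteq> V"
  shows "\<exists>x\<in>V - S. \<exists>y\<in>S. E x y"
proof -
  obtain w s where "w \<in> V - S" "s \<in> S" using assms(2-4) by blast
  moreover obtain q where "is_path V E q" "hd q = w" "last q = s"
    using assms(1,2) \<open>w \<in> V - S\<close> \<open>s \<in> S\<close> unfolding connected_graph_def by blast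
  ultimately obtain x y where "E x y" "x \<notin> S" "y \<in> S"
    using successively_crossing[of E q "\<lambda>z. z \<in> S"] by (auto simp: is_path_iff_successively)
  then show ?thesis using edge_vertices by blast
qed

lemma closed_path_extends:
  assumes "connected_graph V E" "is_path V E p" "E (hd p) (last p)" "set p \<noteq> V"
  shows "\<exists>q. is_path V E q \<and> length q = Suc (length p)"
proof -
  have "set p \<subseteq> V" "set p \<noteq> {}"
    using is_path_set[OF assms(2)] is_path_nonempty[OF assms(2)] by auto
  then obtain w y where w: "w \<in> V - set p" and y: "y \<in> set p" and "E w y"
    using connected_cross_edge assms(1,4) by blast
  then obtain us ws where p_split: "p = us @ y # ws" by (meson split_list)
  have "successively E ((y # ws) @ us)"
  proof (cases "us = []")
    case False
    then have "hd p = hd us" "last p = last (y # ws)" using p_split by auto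
    then have "E (last (y # ws)) (hd us)" using assms(3) edge_sym by metis
    moreover have "successively E (y # ws)" "successively E us"
      using assms(2) p_split by (auto simp: is_path_iff_successively successively_append_iff)
    ultimately show ?thesis unfolding successively_append_iff by blast
  qed (use assms(2) p_split in \<open>simp add: is_path_iff_successively\<close>)
  with assms(2) w p_split \<open>E w y\<close> have "is_path V E (w # y # ws @ us)"
    by (auto simp: is_path_iff_successively)
  then show ?thesis using p_split by (intro exI) auto
qed

end

locale nontraceable_detour_graph = simple_graph +
  assumes connected: "connected_graph V E"
    and nontraceable: "\<not> traceable V E"
    and detour: "detour_graph V E"
begin

lemma V_nonempty: "V \<noteq> {}"
  using connected by (simp add: connected_graph_def)

lemma tau_eq_tauG:
  assumes "v \<in> V"
  shows "tau V E v = tauG V E"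
proof -
  obtain p where p: "longest_path p" using longest_path_exists V_nonempty by blast
  then have "hd p \<in> V" using is_path_hd by blast
  then have "tau V E (hd p) = tau V E v" using detour assms unfolding detour_graph_def by blast
  moreover have "tauG V E \<le> tau V E (hd p)" using length_path_le_tau[of p] p by simp
  moreover obtain q where "is_path V E q" "length q = tau V E v"
    using tau_attained[OF assms] by blast
  then have "tau V E v \<le> tauG V E" using length_path_le_tauG[of q] by simp
  ultimately show ?thesis by simp
qed

lemma longest_path_from:
  assumes "v \<in> V"
  shows "\<exists>p. longest_path p \<and> hd p = v"
  using tau_attained[OF assms] tau_eq_tauG[OF assms] by auto

lemma tauG_less_card: "tauG V E < card V"
proof -
  obtain p where p: "longest_path p" using longest_path_exists V_nonempty by blast
  have "set p \<noteq> V" using nontraceable p by (auto simp: traceable_def)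
  then have "card (set p) < card V"
    using finite_V is_path_set[of V E p] p by (intro psubset_card_mono) auto
  then show ?thesis using p distinct_card[OF is_path_distinct[of V E p]] by simp
qed

lemma longest_path_ends_nonadjacent:
  assumes "longest_path p"
  shows "\<not> E (hd p) (last p)"
proof
  assume "E (hd p) (last p)"
  moreover have "set p \<noteq> V"
    using assms tauG_less_card distinct_card[OF is_path_distinct[of V E p]] by auto
  ultimately obtain q where "is_path V E q" "length q = Suc (tauG V E)"
    using closed_path_extends[OF connected] assms by metis
  then show False using length_path_le_tauG[of q] by simp
qed

lemma two_le_tauG: "2 \<le> tauG V E"
proof -
  obtain x where x: "x \<in> V" using V_nonempty by blast
  then have "1 \<le> tauG V E" using length_path_le_tauG[of "[x]"] by simp
  then have "V \<noteq> {x}" using tauG_less_card by auto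
  then obtain y where y: "y \<in> V" "y \<noteq> x" using x by blast
  then obtain q where q: "is_path V E q" "hd q = x" "last q = y"
    using connected x unfolding connected_graph_def by blast
  moreover have "q \<noteq> []" using q(1) is_path_nonempty by blast
  ultimately have "2 \<le> length q" using y(2) by (cases q; cases "tl q") auto
  with q show ?thesis using length_path_le_tauG[OF q(1)] by simp
qed

lemma three_le_card_V: "3 \<le> card V"
  using two_le_tauG tauG_less_card by linarith

lemma connected_delete_vertex:
  assumes x: "x \<in> V"
  shows "connected_graph (V - {x}) (\<lambda>u v. E u v \<and> u \<noteq> x \<and> v \<noteq> x)"
proof -
  define E' where "E' u v \<longleftrightarrow> E u v \<and> u \<noteq> x \<and> v \<noteq> x" for u v
  have "symp E'"
  proof (rule sympI)
    fix a b assume "E' a b" then show "E' b a" using edge_sym[of a b] unfolding E'_def by blast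
  qed
  have reach_sym: "E'\<^sup>*\<^sup>* a b \<Longrightarrow> E'\<^sup>*\<^sup>* b a" for a b
    by (rule sympD[OF symp_rtranclp[OF \<open>symp E'\<close>]])
  have successively_E': "successively E' q" if "successively E q" "x \<notin> set q" for q
    using that by (induction q rule: induct_list012) (auto simp: E'_def)
  obtain Q where Q: "longest_path Q" "hd Q = x" using longest_path_from[OF x] by blast
  define qs where "qs = tl Q"
  have Q_eq: "Q = x # qs"
    using Q is_path_nonempty[of V E Q] unfolding qs_def by (metis list.collapse)
  then have "qs \<noteq> []" using Q two_le_tauG by auto
  have "x \<notin> set qs" "successively E qs"
    using Q Q_eq by (auto simp: is_path_iff_successively successively_Cons)
  then have qs: "x \<notin> set qs" "successively E' qs" using successively_E' by blast+
  \<comment> \<open>otherwise a path from u to x could be prepended to the longest path Q\<close>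
  have reach_hd_qs: "E'\<^sup>*\<^sup>* u (hd qs)" if u: "u \<in> V - {x}" for u
  proof -
    obtain q where q: "is_path V E q" "hd q = u" "last q = x"
      using connected u x unfolding connected_graph_def by blast
    define r where "r = butlast q"
    have q_eq: "q = r @ [x]"
      using q(3) is_path_nonempty[OF q(1)] unfolding r_def by (metis append_butlast_last_id)
    then have "r \<noteq> []" using q(2) u by auto
    have r: "x \<notin> set r" "successively E' r" "hd r = u" "E (last r) x"
      using q q_eq \<open>r \<noteq> []\<close> successively_E'
      by (auto simp: is_path_iff_successively successively_append_iff)
    show ?thesis
    proof (cases "set r \<inter> set qs = {}")
      case True
      with q q_eq Q Q_eq r have "is_path V E (r @ Q)"
        by (auto simp: is_path_iff_successively successively_append_iff)
      then show ?thesis using length_path_le_tauG[of "r @ Q"] Q \<open>r \<noteq> []\<close> by simp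
    next
      case False
      then obtain z where z: "z \<in> set r" "z \<in> set qs" by blast
      have "E'\<^sup>*\<^sup>* u z" using successively_rtranclp_hd[OF r(2) z(1)] r(3) by simp
      moreover have "E'\<^sup>*\<^sup>* z (hd qs)"
        using reach_sym[OF successively_rtranclp_hd[OF qs(2) z(2)]] .
      ultimately show ?thesis by (rule rtranclp_trans)
    qed
  qed
  have "V \<noteq> {x}" using three_le_card_V by auto
  then have "V - {x} \<noteq> {}" using x by blast
  moreover have "E' u v \<Longrightarrow> v \<in> V - {x}" for u v
    unfolding E'_def using edge_vertices by blast
  moreover have "E'\<^sup>*\<^sup>* u v" if "u \<in> V - {x}" "v \<in> V - {x}" for u v
    using reach_hd_qs[OF that(1)] reach_sym[OF reach_hd_qs[OF that(2)]] by (rule rtranclp_trans)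
  ultimately show ?thesis using connected_graphI[of "V - {x}" E'] unfolding E'_def by blast
qed

lemma two_connected: "two_connected V E"
  using three_le_card_V connected connected_delete_vertex
  by (simp add: two_connected_def delete_vertex_def)

lemma degree_ge_2:
  assumes v: "v \<in> V"
  shows "2 \<le> deg v"
proof -
  obtain Q where Q: "longest_path Q" "hd Q = v" using longest_path_from[OF v] by blast
  then obtain y ys where Q_eq: "Q = v # y # ys"
    using two_le_tauG by (cases Q; cases "tl Q") auto
  then have y: "E v y" using Q by (auto simp: is_path_iff_successively)
  have "y \<in> V" using edge_vertices[OF y] by blast
  obtain z where z: "z \<in> V" "z \<noteq> v" "z \<noteq> y"
  proof -
    have "\<not> V \<subseteq> {v, y}"
    proof
      assume "V \<subseteq> {v, y}"
      then have "card V \<le> card {v, y}" by (intro card_mono) auto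
      then show False using three_le_card_V by (simp add: card_insert_if split: if_splits)
    qed
    then show ?thesis using that by blast
  qed
  have "v \<in> V - {y}" "z \<in> V - {y}" using v z y edge_irrefl[of v] by auto
  then obtain p where p: "is_path (V - {y}) (\<lambda>a b. E a b \<and> a \<noteq> y \<and> b \<noteq> y) p"
      "hd p = v" "last p = z"
    using connected_delete_vertex[OF \<open>y \<in> V\<close>] unfolding connected_graph_def by blast
  then obtain b rest where "p = v # b # rest"
    using z is_path_nonempty[OF p(1)] by (cases p; cases "tl p") auto
  then have "E v b" "b \<noteq> y" using p by (auto simp: is_path_iff_successively)
  then have "card {y, b} \<le> deg v" using y edge_vertices by (intro degree_ge_card) auto
  then show ?thesis using \<open>b \<noteq> y\<close> by simp
qed

lemma degree_2_neighbour_of_hd: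
  assumes P: "longest_path (v # ys)" and a: "E v a" "deg a = 2"
  shows "a = hd ys \<or> a = last ys"
proof (rule ccontr)
  assume not_end: "\<not> ?thesis"
  have "a \<in> set ys" using longest_path_hd_neighbour[OF P] a edge_irrefl by force
  then obtain us ws where ys_eq: "ys = us @ a # ws" by (meson split_list)
  with not_end have "us \<noteq> []" "ws \<noteq> []" by auto
  have "successively E (us @ a # ws)" "distinct (v # ys)"
    using P ys_eq by (auto simp: is_path_iff_successively successively_Cons)
  then have "E (last us) a" "successively E (a # ws)"
    using \<open>us \<noteq> []\<close> by (auto simp: successively_append_iff)
  moreover have "E a (hd ws)"
    using \<open>successively E (a # ws)\<close> \<open>ws \<noteq> []\<close> by (cases ws) auto
  moreover have "last us \<in> set us" "hd ws \<in> set ws"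
    using \<open>us \<noteq> []\<close> \<open>ws \<noteq> []\<close> by auto
  ultimately have "v \<noteq> last us" "v \<noteq> hd ws" "last us \<noteq> hd ws"
    using ys_eq \<open>distinct (v # ys)\<close> by auto
  then have "card {v, last us, hd ws} = 3" by simp
  moreover have "card {v, last us, hd ws} \<le> deg a"
    using \<open>E a (hd ws)\<close> edge_sym[OF \<open>E (last us) a\<close>] edge_sym[OF a(1)] edge_vertices
    by (intro degree_ge_card) blast
  ultimately show False using a(2) by simp
qed

lemma degree_2_neighbours_eq:
  assumes "E v a" "E v b" "deg a = 2" "deg b = 2"
  shows "a = b"
proof (rule ccontr)
  assume "a \<noteq> b"
  obtain P where P: "longest_path P" "hd P = v"
    using longest_path_from edge_vertices assms(1) by blast
  then obtain ys where P_eq: "P = v # ys"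
    using is_path_nonempty[of V E P] by (cases P) auto
  then have "ys \<noteq> []" using P two_le_tauG by auto
  have "longest_path (v # ys)" using P P_eq by simp
  then have "a = hd ys \<or> a = last ys" "b = hd ys \<or> b = last ys"
    using degree_2_neighbour_of_hd assms by blast+
  with \<open>a \<noteq> b\<close> have "a = last ys \<or> b = last ys" by blast
  then have "E v (last ys)" using assms(1,2) by blast
  moreover have "last P = last ys" using P_eq \<open>ys \<noteq> []\<close> by simp
  ultimately show False using longest_path_ends_nonadjacent[OF P(1)] P(2) by simp
qed

lemma card_degree_2_neighbours_le_1: "card {u \<in> V. E v u \<and> deg u = 2} \<le> 1"
proof -
  let ?S = "{u \<in> V. E v u \<and> deg u = 2}"
  have "finite ?S" using finite_V by simp
  moreover have "a = b" if "a \<in> ?S" "b \<in> ?S" for a b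
    using that degree_2_neighbours_eq[of v a b] by simp
  ultimately show ?thesis unfolding One_nat_def card_le_Suc0_iff_eq[OF \<open>finite ?S\<close>] by blast
qed

lemma longest_path_rotate_hd:
  assumes P: "longest_path P"
  shows "\<exists>P'. longest_path P' \<and> 3 \<le> deg (hd P') \<and> last P' = last P"
proof (cases "3 \<le> deg (hd P)")
  case False
  obtain a ys where P_eq: "P = a # ys" using P is_path_nonempty[of V E P] by (cases P) auto
  then have "a \<in> V" using P is_path_hd[of V E P] by simp
  then have "deg a = 2" using False degree_ge_2 P_eq by fastforce
  have "ys \<noteq> []" using P P_eq two_le_tauG by auto
  have "{u \<in> V. E a u} \<noteq> {hd ys}" using \<open>deg a = 2\<close> by (auto simp: degree_def)
  moreover have "E a (hd ys)" using P P_eq \<open>ys \<noteq> []\<close>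
    by (cases ys) (auto simp: is_path_iff_successively)
  ultimately obtain y where y: "E a y" "y \<noteq> hd ys" using edge_vertices by blast
  then have "y \<in> set ys" using longest_path_hd_neighbour[OF P] P_eq edge_irrefl by force
  then obtain us ws where ys_eq: "ys = us @ y # ws" by (meson split_list)
  with y have "us \<noteq> []" by auto
  define P' where "P' = rev (a # us) @ y # ws"
  have "is_path V E P'"
    using is_path_rotate[of "a # us" "y # ws"] P P_eq ys_eq y unfolding P'_def by simp
  moreover have "length P' = length P" "last P' = last P" "hd P' = last us"
    using P_eq ys_eq \<open>us \<noteq> []\<close> unfolding P'_def by (auto simp: hd_append hd_rev)
  moreover have "3 \<le> deg (last us)"
  proof -
    have "successively E (us @ y # ws)" "distinct (a # us)"
      using P P_eq ys_eq by (auto simp: is_path_iff_successively successively_Cons)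
    then have "E (last us) y" "last us \<noteq> a"
      using \<open>us \<noteq> []\<close> by (auto simp: successively_append_iff)
    then have "E y (last us)" using edge_sym by blast
    then have "deg (last us) \<noteq> 2"
      using degree_2_neighbours_eq[of y a "last us"] edge_sym[OF y(1)] \<open>deg a = 2\<close>
        \<open>last us \<noteq> a\<close> by blast
    moreover have "last us \<in> V" using edge_vertices \<open>E y (last us)\<close> by blast
    ultimately show ?thesis using degree_ge_2 by fastforce
  qed
  ultimately show ?thesis using P by metis
qed (use P in blast)

lemma longest_path_rotate_last:
  assumes "longest_path P"
  shows "\<exists>P'. longest_path P' \<and> hd P' = hd P \<and> 3 \<le> deg (last P')"
proof -
  obtain P' where P': "longest_path P'" "3 \<le> deg (hd P')" "last P' = last (rev P)"
    using longest_path_rotate_hd[of "rev P"] assms by auto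
  moreover have "P \<noteq> []" "P' \<noteq> []" using assms P' is_path_nonempty by blast+
  ultimately show ?thesis by (intro exI[of _ "rev P'"]) (simp add: hd_rev last_rev)
qed

lemma longest_path_ends_degree_ge_3:
  "\<exists>P. longest_path P \<and> 3 \<le> deg (hd P) \<and> 3 \<le> deg (last P)"
proof -
  obtain P where "longest_path P" using longest_path_exists V_nonempty by blast
  then obtain P1 where "longest_path P1" "3 \<le> deg (hd P1)"
    using longest_path_rotate_hd by blast
  then show ?thesis using longest_path_rotate_last by metis
qed

lemma degree_hd_add_degree_last_less:
  assumes Q: "longest_path Q"
  shows "deg (hd Q) + deg (last Q) < length Q"
proof -
  define A where "A = {i. i < length Q - 1 \<and> E (hd Q) (Q ! Suc i)}"
  define B where "B = {i. i < length Q - 1 \<and> E (last Q) (Q ! i)}"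
  have "A \<inter> B = {}"
  proof (rule ccontr)
    assume "A \<inter> B \<noteq> {}"
    then obtain j where j: "j < length Q - 1" "E (hd Q) (Q ! Suc j)" "E (last Q) (Q ! j)"
      unfolding A_def B_def by blast
    define xs ys where "xs = take (Suc j) Q" and "ys = drop (Suc j) Q"
    have "Q = xs @ ys" "xs \<noteq> []" "ys \<noteq> []" "hd xs = hd Q" "hd ys = Q ! Suc j"
      "last ys = last Q"
      using j unfolding xs_def ys_def by (auto simp: hd_drop_conv_nth)
    moreover have "last xs = Q ! j"
      using j unfolding xs_def by (simp add: take_Suc_conv_app_nth)
    ultimately have "longest_path (rev xs @ ys)"
      using is_path_rotate[of xs ys] Q j(2) by auto
    moreover have "E (hd (rev xs @ ys)) (last (rev xs @ ys))"
      using \<open>xs \<noteq> []\<close> \<open>ys \<noteq> []\<close> \<open>last xs = Q ! j\<close> \<open>last ys = last Q\<close>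
        edge_sym[OF j(3)]
      by (simp add: hd_rev)
    ultimately show False using longest_path_ends_nonadjacent by blast
  qed
  then have "card A + card B = card (A \<union> B)"
    by (simp add: card_Un_disjoint A_def B_def)
  also have "\<dots> \<le> length Q - 1"
    using card_mono[of "{..<length Q - 1}" "A \<union> B"] unfolding A_def B_def by auto
  finally show ?thesis
    using degree_hd_longest_path[OF Q] degree_last_longest_path[OF Q] Q two_le_tauG
    unfolding A_def B_def by linarith
qed

lemma degree_add_4_le_tauG:
  assumes "v \<in> V"
  shows "deg v + 4 \<le> tauG V E"
proof -
  obtain P where "longest_path P" "hd P = v" using longest_path_from[OF assms] by blast
  then obtain Q where "longest_path Q" "hd Q = v" "3 \<le> deg (last Q)"
    using longest_path_rotate_last by metis
  then show ?thesis using degree_hd_add_degree_last_less[of Q] by simp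
qed

lemma card_degree_2_le_card_others:
  defines "T \<equiv> {v \<in> V. deg v = 2}"
  shows "card T \<le> card (V - T)"
proof -
  have "\<forall>t\<in>T. \<exists>u. E t u \<and> deg u \<noteq> 2"
  proof
    fix t assume "t \<in> T"
    have "card {u \<in> V. E t u} = 2" using \<open>t \<in> T\<close> by (simp add: T_def degree_def)
    then obtain a b where "{u \<in> V. E t u} = {a, b}" "a \<noteq> b"
      unfolding card_2_iff by blast
    then have "E t a" "E t b" by blast+
    moreover have "deg a \<noteq> 2 \<or> deg b \<noteq> 2"
      using degree_2_neighbours_eq[OF \<open>E t a\<close> \<open>E t b\<close>] \<open>a \<noteq> b\<close> by blast
    ultimately show "\<exists>u. E t u \<and> deg u \<noteq> 2" by blast
  qed
  from bchoice[OF this] obtain f where f: "\<forall>t\<in>T. E t (f t) \<and> deg (f t) \<noteq> 2" by blast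
  have "inj_on f T"
  proof (rule inj_onI)
    fix a b assume "a \<in> T" "b \<in> T" "f a = f b"
    then have "E (f a) a" "E (f a) b"
      using f edge_sym[of a "f a"] edge_sym[of b "f b"] by auto
    with \<open>a \<in> T\<close> \<open>b \<in> T\<close> show "a = b"
      using degree_2_neighbours_eq[of "f a" a b] unfolding T_def by blast
  qed
  moreover have "f ` T \<subseteq> V - T" using f edge_vertices unfolding T_def by blast
  ultimately show ?thesis using finite_V by (intro card_inj_on_le) simp_all
qed

lemma five_card_V_le: "5 * card V \<le> 4 * card (edges V E)"
proof -
  define T where "T = {v \<in> V. deg v = 2}"
  have "T \<subseteq> V" unfolding T_def by blast
  have card_V: "card V = card (V - T) + card T"
    using card_Diff_subset[OF finite_subset[OF \<open>T \<subseteq> V\<close> finite_V] \<open>T \<subseteq> V\<close>]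
      card_mono[OF finite_V \<open>T \<subseteq> V\<close>]
    by linarith
  have "3 * card (V - T) + 2 * card T \<le> (\<Sum>v\<in>V - T. deg v) + (\<Sum>v\<in>T. deg v)"
  proof -
    have "3 \<le> deg v" if "v \<in> V - T" for v using that degree_ge_2[of v] unfolding T_def by auto
    then have "3 * card (V - T) \<le> (\<Sum>v\<in>V - T. deg v)"
      using sum_bounded_below[of "V - T" 3 deg] by (simp add: mult.commute)
    moreover have "(\<Sum>v\<in>T. deg v) = 2 * card T" unfolding T_def by simp
    ultimately show ?thesis by simp
  qed
  also have "\<dots> = 2 * card (edges V E)"
    using sum.subset_diff[OF \<open>T \<subseteq> V\<close> finite_V, of deg] sum_degree by simp
  finally show ?thesis
    using card_V card_degree_2_le_card_others unfolding T_def by linarith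
qed

end

theorem theorem2p2:
  fixes V :: "'a set" and E :: "'a \<Rightarrow> 'a \<Rightarrow> bool" and n :: nat
  assumes "sgraph V E" and "connected_graph V E" and "\<not> traceable V E"
    and "detour_graph V E" and "n = card V"
  shows "(two_connected V E \<and> (\<forall>v\<in>V. degree V E v \<ge> 2))
    \<and> (\<forall>v\<in>V. card {u \<in> V. E v u \<and> degree V E u = 2} \<le> 1)
    \<and> (\<exists>P. is_path V E P \<and> length P = tauG V E
           \<and> degree V E (hd P) \<ge> 3 \<and> degree V E (last P) \<ge> 3)
    \<and> (\<forall>v\<in>V. degree V E v + 4 \<le> tauG V E)
    \<and> (\<forall>T. T = {v \<in> V. degree V E v = 2} \<longrightarrow> card (V - T) \<ge> card T)
    \<and> int (card (edges V E)) \<ge> \<lceil>5 * real n / 4\<rceil>"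
proof -
  interpret nontraceable_detour_graph V E
    using assms(1-4) by unfold_locales
  have "\<lceil>5 * real n / 4\<rceil> \<le> int (card (edges V E))"
    using five_card_V_le assms(5) by (simp add: ceiling_le_iff field_simps)
  then show ?thesis
    using two_connected degree_ge_2 card_degree_2_neighbours_le_1 longest_path_ends_degree_ge_3
      degree_add_4_le_tauG card_degree_2_le_card_others
    by blast
qed

end
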